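(* Let $s\ge2$. There exists a constant $c>0$ (depending on $s$) such that $\|r\|_{U^s[2^L]}=O(2^{-cL})$ as $L\to\infty$.
   Context: Let $r(n)=(-1)^{f_{11}(n)}$ be the Rudin-Shapiro sequence, $f_{11}(n)$ being the number of occurrences of the block $11$ in the binary expansion of $n$. Write $[M]=\{0,\dots,M-1\}$. For $f\colon[M]\to\mathbb{R}$, the Gowers norm is $\|f\|_{U^s[M]}^{2^s}=\mathbb{E}_{n,\mathbf h}\prod_{\omega\in\{0,1\}^s}f(n+\omega\cdot\mathbf h)$, with $\omega\cdot\mathbf h=\sum_{i=1}^s\omega_ih_i$ and the expectation over all $n\in\mathbb{Z}$, $\mathbf h\in\mathbb{Z}^s$ with $\{n+\omega\cdot\mathbf h:\omega\in\{0,1\}^s\}\subset[M]$. *)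

theory Defs
  imports Complex_Main "HOL-Library.Landau_Symbols"
begin

definition f11 :: "nat \<Rightarrow> nat" where
  "f11 n = card {k. odd (n div 2 ^ k) \<and> odd (n div 2 ^ (Suc k))}"

text \<open>Rudin-Shapiro sequence (only evaluated at nonnegative integers).\<close>
definition rudin_shapiro :: "int \<Rightarrow> real" where
  "rudin_shapiro n = (-1) ^ f11 (nat n)"

text \<open>omega in {0,1}^s is encoded as a subset S of {..<s};
  omega . h = sum over i in S of h_i; h is a list of length s.\<close>
definition gowers_params :: "nat \<Rightarrow> nat \<Rightarrow> (int \<times> int list) set" where
  "gowers_params s M = {(n, h). length h = s \<and>
      (\<forall>S \<in> Pow {..<s}. n + (\<Sum>i\<in>S. h ! i) \<in> {0..<int M})}"

definition gowers_pow :: "(int \<Rightarrow> real) \<Rightarrow> nat \<Rightarrow> nat \<Rightarrow> real" where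
  "gowers_pow f s M = (\<Sum>p\<in>gowers_params s M.
      \<Prod>S\<in>Pow {..<s}. f (fst p + (\<Sum>i\<in>S. snd p ! i))) / real (card (gowers_params s M))"

definition gowers_norm :: "(int \<Rightarrow> real) \<Rightarrow> nat \<Rightarrow> nat \<Rightarrow> real" where
  "gowers_norm f s M = root (2 ^ s) (gowers_pow f s M)"

end

theory Submission
  imports Defs
begin

text \<open>Split every coordinate of a Gowers cube at scale \<open>2^(L+J)\<close> into its \<open>J\<close> lowest binary
  digits and the rest. Since \<open>r(2^J m + u) = r(u) r(m)\<close>, up to a sign \<open>-1\<close> when the top bit
  of \<open>u\<close> and the lowest bit of \<open>m\<close> are both 1, the Gowers sum becomes a sum over the
  \<open>2^(J(s+1))\<close> boxes of low digits of signed Gowers sums at scale \<open>2^L\<close>, twisted by these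
  parities and shifted by the carries out of the low digits. Carries stay in \<open>[0, s]\<close>, so the
  twisted sums obey the same trivial bound. For \<open>J = 2s\<^sup>2 + 3\<close> there are two boxes with equal
  carries and twists but opposite signs, so every block of \<open>J\<close> digits gains a factor
  \<open>1 - 2/2^(J(s+1))\<close> over the trivial bound. Iterating gives geometric decay of the
  \<open>2^s\<close>-th power of the norm.\<close>

section \<open>The Rudin-Shapiro sequence on concatenated binary blocks\<close>

lemma finite_f11_positions: "finite {k. odd ((n::nat) div 2 ^ k) \<and> odd (n div 2 ^ Suc k)}"
proof (rule finite_subset)
  show "{k. odd (n div 2 ^ k) \<and> odd (n div 2 ^ Suc k)} \<subseteq> {..<n}"
  proof
    fix k assume "k \<in> {k. odd (n div 2 ^ k) \<and> odd (n div 2 ^ Suc k)}"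
    then have "n div 2 ^ k \<noteq> 0" by (metis even_zero mem_Collect_eq)
    then have "2 ^ k \<le> n" by (simp add: div_eq_0_iff not_less)
    then show "k \<in> {..<n}" using less_exp[of k] by (simp only: lessThan_iff)
  qed
qed simp

lemma Collect_nat_split_zero:
  "{k::nat. P k} = (if P 0 then {0} else {}) \<union> Suc ` {k. P (Suc k)}"
proof -
  have "x \<in> {k. P k} \<longleftrightarrow> x \<in> (if P 0 then {0} else {}) \<union> Suc ` {k. P (Suc k)}" for x
    by (cases x) auto
  then show ?thesis by blast
qed

lemma f11_double_add:
  assumes "d \<le> 1"
  shows "f11 (2 * m + d) = f11 m + (if d = 1 \<and> odd m then 1 else 0)"
proof -
  have shift: "(2 * m + d) div 2 ^ Suc k = m div 2 ^ k" for k
    using assms by (simp add: div_mult2_eq)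
  have low: "odd (2 * m + d) \<and> odd ((2 * m + d) div 2 ^ Suc 0) \<longleftrightarrow> d = 1 \<and> odd m"
    using assms shift[of 0] by (cases d) auto
  have "{k. odd ((2 * m + d) div 2 ^ k) \<and> odd ((2 * m + d) div 2 ^ Suc k)}
      = (if d = 1 \<and> odd m then {0} else {}) \<union> Suc ` {k. odd (m div 2 ^ k) \<and> odd (m div 2 ^ Suc k)}"
    by (subst Collect_nat_split_zero) (use low shift in \<open>simp del: power_Suc\<close>)
  then show ?thesis
    unfolding f11_def using finite_f11_positions[of m]
    by (simp add: card_image del: power_Suc)
qed

lemma f11_0: "f11 0 = 0"
  unfolding f11_def by simp

lemma f11_1: "f11 1 = 0"
  using f11_double_add[of 1 0] f11_0 by simp

lemma f11_concat:
  assumes "u < 2 ^ Suc j"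
  shows "f11 (2 ^ Suc j * m + u) = f11 u + f11 m + (if 2 ^ j \<le> u \<and> odd m then 1 else 0)"
  using assms
proof (induction j arbitrary: u)
  case 0
  then have "u = 0 \<or> u = 1" by auto
  then show ?case using f11_double_add[of u m] f11_0 f11_1 by auto
next
  case (Suc j)
  define u' d where "u' = u div 2" and "d = u mod 2"
  have u: "u = 2 * u' + d" and d: "d \<le> 1" unfolding u'_def d_def by auto
  have u': "u' < 2 ^ Suc j" using Suc.prems u by simp
  have eq: "2 ^ Suc (Suc j) * m + u = 2 * (2 ^ Suc j * m + u') + d" using u by simp
  have "f11 (2 ^ Suc (Suc j) * m + u)
      = f11 (2 ^ Suc j * m + u') + (if d = 1 \<and> odd (2 ^ Suc j * m + u') then 1 else 0)"
    unfolding eq by (rule f11_double_add[OF d])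
  also have "\<dots> = f11 (2 ^ Suc j * m + u') + (if d = 1 \<and> odd u' then 1 else 0)"
    by simp
  also have "\<dots> = f11 u' + f11 m + (if 2 ^ j \<le> u' \<and> odd m then 1 else 0)
      + (if d = 1 \<and> odd u' then 1 else 0)"
    using Suc.IH[OF u'] by simp
  finally have "f11 (2 ^ Suc (Suc j) * m + u) = f11 u' + f11 m
      + (if 2 ^ j \<le> u' \<and> odd m then 1 else 0) + (if d = 1 \<and> odd u' then 1 else 0)" .
  moreover have "f11 u = f11 u' + (if d = 1 \<and> odd u' then 1 else 0)"
    using u f11_double_add[OF d] by simp
  moreover have "2 ^ j \<le> u' \<longleftrightarrow> 2 ^ Suc j \<le> u" using u d by auto
  ultimately show ?case by simp
qed

lemma rudin_shapiro_concat:
  fixes m u :: int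
  assumes "0 \<le> m" "0 \<le> u" "u < 2 ^ Suc j"
  shows "rudin_shapiro (2 ^ Suc j * m + u)
    = rudin_shapiro u * rudin_shapiro m * (if 2 ^ j \<le> u \<and> odd m then -1 else 1)"
proof -
  have n: "nat (2 ^ Suc j * m + u) = 2 ^ Suc j * nat m + nat u"
    using assms by (simp add: nat_add_distrib nat_mult_distrib nat_power_eq)
  have u: "nat u < 2 ^ Suc j" and top: "2 ^ j \<le> nat u \<longleftrightarrow> 2 ^ j \<le> u"
    and par: "odd (nat m) \<longleftrightarrow> odd m"
    using assms by (simp_all add: nat_less_iff le_nat_iff even_nat_iff)
  show ?thesis
    unfolding rudin_shapiro_def n f11_concat[OF u] top par by (simp add: power_add)
qed

lemma rudin_shapiro_1: "rudin_shapiro 1 = 1"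
  unfolding rudin_shapiro_def using f11_1 by simp

lemma abs_rudin_shapiro: "\<bar>rudin_shapiro x\<bar> = 1"
  unfolding rudin_shapiro_def by (simp add: power_abs)

section \<open>Twisted Gowers sums\<close>

definition cube_dot :: "int list \<Rightarrow> nat set \<Rightarrow> int" where
  "cube_dot h S = (\<Sum>i\<in>S. h ! i)"

text \<open>Once low binary digits are split off, the vertex \<open>S\<close> of a Gowers cube receives an
  additive carry \<open>e S\<close> from the low digits and a sign from the bit pair straddling the cut:
  it is \<open>-1\<close> exactly when the top low bit was 1 (recorded by \<open>c S\<close>) and the high part is odd.\<close>
definition twisted_rs :: "(nat set \<Rightarrow> bool) \<Rightarrow> nat set \<Rightarrow> int \<Rightarrow> real" where
  "twisted_rs c S x = rudin_shapiro x * (if c S \<and> odd x then -1 else 1)"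

definition cube_params :: "nat \<Rightarrow> nat \<Rightarrow> (nat set \<Rightarrow> int) \<Rightarrow> (int \<times> int list) set" where
  "cube_params s L e = {(n, h). length h = s \<and>
      (\<forall>S\<in>Pow {..<s}. n + cube_dot h S + e S \<in> {0..<2 ^ L})}"

definition twisted_gowers_sum ::
    "nat \<Rightarrow> nat \<Rightarrow> (nat set \<Rightarrow> bool) \<Rightarrow> (nat set \<Rightarrow> int) \<Rightarrow> real" where
  "twisted_gowers_sum s L c e = (\<Sum>p\<in>cube_params s L e.
      \<Prod>S\<in>Pow {..<s}. twisted_rs c S (fst p + cube_dot (snd p) S + e S))"

lemma mem_cube_params:
  "p \<in> cube_params s L e \<longleftrightarrow>
    length (snd p) = s \<and> (\<forall>S\<in>Pow {..<s}. fst p + cube_dot (snd p) S + e S \<in> {0..<2 ^ L})"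
  by (cases p) (simp add: cube_params_def)

lemma cube_params_zero: "cube_params s L (\<lambda>_. 0) = gowers_params s (2 ^ L)"
  unfolding cube_params_def gowers_params_def cube_dot_def by simp

lemma gowers_pow_rudin_shapiro_eq:
  "gowers_pow rudin_shapiro s (2 ^ L)
    = twisted_gowers_sum s L (\<lambda>_. False) (\<lambda>_. 0) / real (card (gowers_params s (2 ^ L)))"
  unfolding gowers_pow_def twisted_gowers_sum_def cube_params_zero
  by (simp add: twisted_rs_def cube_dot_def)

lemma abs_twisted_rs: "\<bar>twisted_rs c S x\<bar> = 1"
  by (simp add: twisted_rs_def abs_mult abs_rudin_shapiro)

lemma abs_prod_twisted_rs: "\<bar>\<Prod>S\<in>X. twisted_rs c S (x S)\<bar> = 1"
  by (simp add: abs_prod abs_twisted_rs)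

lemma twisted_gowers_sum_cong:
  assumes "\<And>S. S \<in> Pow {..<s} \<Longrightarrow> c S = c' S \<and> e S = e' S"
  shows "twisted_gowers_sum s L c e = twisted_gowers_sum s L c' e'"
proof -
  have "cube_params s L e = cube_params s L e'"
    unfolding cube_params_def using assms by auto
  moreover have "(\<Prod>S\<in>Pow {..<s}. twisted_rs c S (fst p + cube_dot (snd p) S + e S))
      = (\<Prod>S\<in>Pow {..<s}. twisted_rs c' S (fst p + cube_dot (snd p) S + e' S))" for p
    using assms by (intro prod.cong refl) (auto simp: twisted_rs_def)
  ultimately show ?thesis
    unfolding twisted_gowers_sum_def by simp
qed

definition bounded_offsets :: "nat \<Rightarrow> (nat set \<Rightarrow> int) \<Rightarrow> bool" where
  "bounded_offsets s e \<longleftrightarrow> (\<forall>S\<in>Pow {..<s}. 0 \<le> e S \<and> e S \<le> int s)"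

lemma cube_params_subset:
  assumes "bounded_offsets s e"
  shows "cube_params s L e \<subseteq> {- int s..<2 ^ L} \<times>
    {xs. set xs \<subseteq> {- (2 ^ L) - int s ..< 2 ^ L + int s} \<and> length xs = s}"
proof
  fix p assume "p \<in> cube_params s L e"
  then obtain n h where p: "p = (n, h)" and len: "length h = s"
    and range: "\<And>S. S \<subseteq> {..<s} \<Longrightarrow> n + cube_dot h S + e S \<in> {0..<2 ^ L}"
    unfolding cube_params_def by auto
  have e: "0 \<le> e S" "e S \<le> int s" if "S \<subseteq> {..<s}" for S
    using assms that unfolding bounded_offsets_def by auto
  have n: "n + e {} \<in> {0..<2 ^ L}"
    using range[of "{}"] by (simp add: cube_dot_def)
  have "h ! i \<in> {- (2 ^ L) - int s ..< 2 ^ L + int s}" if "i < s" for i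
    using range[of "{i}"] n e[of "{}"] e[of "{i}"] that by (auto simp: cube_dot_def)
  then have "set h \<subseteq> {- (2 ^ L) - int s ..< 2 ^ L + int s}"
    using len by (auto simp: in_set_conv_nth)
  then show "p \<in> {- int s..<2 ^ L} \<times>
      {xs. set xs \<subseteq> {- (2 ^ L) - int s ..< 2 ^ L + int s} \<and> length xs = s}"
    using p n e[of "{}"] len by auto
qed

lemma finite_cube_params:
  assumes "bounded_offsets s e"
  shows "finite (cube_params s L e)"
  by (rule finite_subset[OF cube_params_subset[OF assms]])
    (intro finite_cartesian_product finite_lists_length_eq; simp)

lemma card_cube_params_le:
  assumes "bounded_offsets s e"
  shows "real (card (cube_params s L e)) \<le> (2 * real s + 2) ^ (s + 1) * 2 ^ (L * (s + 1))"
proof -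
  define X :: int where "X = 2 ^ L"
  define Y :: real where "Y = 2 ^ L"
  have "card (cube_params s L e)
      \<le> card ({- int s..<X} \<times> {xs. set xs \<subseteq> {- X - int s..<X + int s} \<and> length xs = s})"
    unfolding X_def
    by (intro card_mono[OF _ cube_params_subset[OF assms]] finite_cartesian_product
        finite_lists_length_eq) simp_all
  also have "\<dots> = nat (X + int s) * nat (2 * X + 2 * int s) ^ s"
    by (simp add: card_cartesian_product card_lists_length_eq)
  finally have "real (card (cube_params s L e))
      \<le> real (nat (X + int s) * nat (2 * X + 2 * int s) ^ s)"
    by (simp only: of_nat_le_iff)
  also have "\<dots> = (Y + real s) * (2 * Y + 2 * real s) ^ s"
    unfolding X_def Y_def by simp
  also have "\<dots> \<le> ((2 * real s + 2) * Y) * ((2 * real s + 2) * Y) ^ s"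
  proof -
    have Y: "1 \<le> Y" unfolding Y_def by simp
    then have "real s \<le> real s * Y"
      using mult_left_mono[of 1 Y "real s"] by simp
    with Y show ?thesis
      by (intro mult_mono power_mono) (auto simp: algebra_simps)
  qed
  also have "\<dots> = (2 * real s + 2) ^ (s + 1) * 2 ^ (L * (s + 1))"
    unfolding Y_def by (simp add: power_mult_distrib power_mult[symmetric] power_add mult.commute)
  finally show ?thesis .
qed

lemma abs_twisted_gowers_sum_le:
  "\<bar>twisted_gowers_sum s L c e\<bar> \<le> real (card (cube_params s L e))"
proof -
  have "\<bar>twisted_gowers_sum s L c e\<bar> \<le> (\<Sum>p\<in>cube_params s L e.
      \<bar>\<Prod>S\<in>Pow {..<s}. twisted_rs c S (fst p + cube_dot (snd p) S + e S)\<bar>)"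
    unfolding twisted_gowers_sum_def by (rule sum_abs)
  then show ?thesis
    by (simp add: abs_prod_twisted_rs)
qed

section \<open>Splitting off low binary digits\<close>

definition digit_box :: "nat \<Rightarrow> nat \<Rightarrow> (int \<times> int list) set" where
  "digit_box s j = {(A, B). A \<in> {0..<2 ^ Suc j} \<and> length B = s \<and>
      (\<forall>i<s. B ! i \<in> {0..<2 ^ Suc j})}"

definition low_sum :: "(nat set \<Rightarrow> int) \<Rightarrow> int \<Rightarrow> int list \<Rightarrow> nat set \<Rightarrow> int" where
  "low_sum e A B S = A + cube_dot B S + e S"

definition carry :: "nat \<Rightarrow> (nat set \<Rightarrow> int) \<Rightarrow> int \<Rightarrow> int list \<Rightarrow> nat set \<Rightarrow> int" where
  "carry j e A B S = low_sum e A B S div 2 ^ Suc j"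

definition low_digits :: "nat \<Rightarrow> (nat set \<Rightarrow> int) \<Rightarrow> int \<Rightarrow> int list \<Rightarrow> nat set \<Rightarrow> int" where
  "low_digits j e A B S = low_sum e A B S mod 2 ^ Suc j"

definition top_bit :: "nat \<Rightarrow> (nat set \<Rightarrow> int) \<Rightarrow> int \<Rightarrow> int list \<Rightarrow> nat set \<Rightarrow> bool" where
  "top_bit j e A B S \<longleftrightarrow> 2 ^ j \<le> low_digits j e A B S"

definition box_weight ::
    "nat \<Rightarrow> nat \<Rightarrow> (nat set \<Rightarrow> bool) \<Rightarrow> (nat set \<Rightarrow> int) \<Rightarrow> int \<Rightarrow> int list \<Rightarrow> real" where
  "box_weight s j c e A B = (\<Prod>S\<in>Pow {..<s}. twisted_rs c S (low_digits j e A B S))"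

definition join_digits :: "nat \<Rightarrow> (int \<times> int list) \<times> (int \<times> int list) \<Rightarrow> int \<times> int list" where
  "join_digits j x = (case x of ((A, B), (n, h)) \<Rightarrow>
      (2 ^ Suc j * n + A, map2 (\<lambda>b y. 2 ^ Suc j * y + b) B h))"

definition split_digits :: "nat \<Rightarrow> int \<times> int list \<Rightarrow> (int \<times> int list) \<times> (int \<times> int list)" where
  "split_digits j p = (case p of (n, h) \<Rightarrow>
      ((n mod 2 ^ Suc j, map (\<lambda>y. y mod 2 ^ Suc j) h),
       (n div 2 ^ Suc j, map (\<lambda>y. y div 2 ^ Suc j) h)))"

lemma finite_digit_box: "finite (digit_box s j)"
proof -
  have "digit_box s j \<subseteq> {0..<(2::int) ^ Suc j} \<times>
      {xs. set xs \<subseteq> {0..<(2::int) ^ Suc j} \<and> length xs = s}"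
    unfolding digit_box_def by (auto simp: in_set_conv_nth)
  then show ?thesis
    by (rule finite_subset) (intro finite_cartesian_product finite_lists_length_eq; simp)
qed

lemma card_digit_box: "card (digit_box s j) = 2 ^ (Suc j * (s + 1))"
proof -
  have "digit_box s j = {0..<(2::int) ^ Suc j} \<times>
      {xs. set xs \<subseteq> {0..<(2::int) ^ Suc j} \<and> length xs = s}"
    unfolding digit_box_def by (fastforce simp: in_set_conv_nth subset_iff)
  moreover have "card {0..<(2::int) ^ Suc j} = 2 ^ Suc j"
    by (simp add: nat_power_eq del: power_Suc)
  ultimately show ?thesis
    by (simp add: card_cartesian_product card_lists_length_eq power_mult power_add mult.commute)
qed

lemma low_digits_bounds: "0 \<le> low_digits j e A B S" "low_digits j e A B S < 2 ^ Suc j"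
  unfolding low_digits_def by simp_all

lemma cube_dot_digit_box_bounds:
  assumes "(A, B) \<in> digit_box s j" "S \<subseteq> {..<s}"
  shows "0 \<le> cube_dot B S" "cube_dot B S \<le> int s * (2 ^ Suc j - 1)"
proof -
  have B: "0 \<le> B ! i \<and> B ! i \<le> 2 ^ Suc j - 1" if "i \<in> S" for i
    using assms that unfolding digit_box_def by auto
  then show "0 \<le> cube_dot B S"
    unfolding cube_dot_def by (intro sum_nonneg) auto
  have "cube_dot B S \<le> int (card S) * (2 ^ Suc j - 1)"
    unfolding cube_dot_def using B by (intro sum_bounded_above) auto
  also have "\<dots> \<le> int s * (2 ^ Suc j - 1)"
    using card_mono[OF _ assms(2)] by (intro mult_right_mono) auto
  finally show "cube_dot B S \<le> int s * (2 ^ Suc j - 1)" .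
qed

lemma bounded_offsets_carry:
  assumes "bounded_offsets s e" "(A, B) \<in> digit_box s j"
  shows "bounded_offsets s (carry j e A B)"
  unfolding bounded_offsets_def
proof
  fix S assume S: "S \<in> Pow {..<s}"
  define P :: int where "P = 2 ^ Suc j"
  have A: "0 \<le> A" "A \<le> P - 1"
    using assms(2) unfolding digit_box_def P_def by auto
  have B: "0 \<le> cube_dot B S" "cube_dot B S \<le> int s * (P - 1)"
    using cube_dot_digit_box_bounds[OF assms(2)] S unfolding P_def by auto
  have e: "0 \<le> e S" "e S \<le> int s"
    using assms(1) S unfolding bounded_offsets_def by auto
  have P: "0 < P" unfolding P_def by simp
  have "0 \<le> low_sum e A B S" "low_sum e A B S \<le> P * int s + (P - 1)"
    using A B e unfolding low_sum_def by (auto simp: algebra_simps)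
  then have "0 \<le> low_sum e A B S div P" "low_sum e A B S div P \<le> (P * int s + (P - 1)) div P"
    using P by (simp_all only: pos_imp_zdiv_nonneg_iff zdiv_mono1)
  moreover have "(P * int s + (P - 1)) div P = int s"
    using P by simp
  ultimately show "0 \<le> carry j e A B S \<and> carry j e A B S \<le> int s"
    unfolding carry_def P_def[symmetric] by simp
qed

lemma mult_add_in_range_iff:
  fixes P m u N :: int
  assumes "0 \<le> u" "u < P"
  shows "P * m + u \<in> {0..<P * N} \<longleftrightarrow> m \<in> {0..<N}"
proof -
  have "0 \<le> P" using assms by simp
  then have "m \<le> - 1 \<Longrightarrow> P * m \<le> P * (- 1)" "m \<le> N - 1 \<Longrightarrow> P * m \<le> P * (N - 1)"
    "N \<le> m \<Longrightarrow> P * N \<le> P * m" "0 \<le> m \<Longrightarrow> P * 0 \<le> P * m"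
    by (simp_all only: mult_left_mono)
  then show ?thesis
    using assms unfolding atLeastLessThan_iff right_diff_distrib by (smt (verit))
qed

lemma twisted_rs_concat:
  fixes m u :: int
  assumes "0 \<le> m" "0 \<le> u" "u < 2 ^ Suc j" "c' S \<longleftrightarrow> 2 ^ j \<le> u"
  shows "twisted_rs c S (2 ^ Suc j * m + u) = twisted_rs c S u * twisted_rs c' S m"
proof -
  have "odd (2 ^ Suc j * m + u) \<longleftrightarrow> odd u" by simp
  then show ?thesis
    unfolding twisted_rs_def rudin_shapiro_concat[OF assms(1-3)] using assms(4) by auto
qed

lemma join_digits_vertex:
  assumes "length B = s" "length h = s" "S \<subseteq> {..<s}"
  shows "fst (join_digits j ((A, B), (n, h))) + cube_dot (snd (join_digits j ((A, B), (n, h)))) S + e S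
    = 2 ^ Suc j * (n + cube_dot h S + carry j e A B S) + low_digits j e A B S"
proof -
  have "cube_dot (map2 (\<lambda>b y. 2 ^ Suc j * y + b) B h) S = (\<Sum>i\<in>S. 2 ^ Suc j * h ! i + B ! i)"
    unfolding cube_dot_def using assms by (intro sum.cong) auto
  also have "\<dots> = 2 ^ Suc j * cube_dot h S + cube_dot B S"
    unfolding cube_dot_def by (simp add: sum.distrib sum_distrib_left)
  finally show ?thesis
    using div_mult_mod_eq[of "low_sum e A B S" "2 ^ Suc j"]
    unfolding join_digits_def carry_def low_digits_def low_sum_def
    by (simp add: algebra_simps)
qed

lemma join_split_digits: "length h = s \<Longrightarrow> join_digits j (split_digits j (n, h)) = (n, h)"
  unfolding join_digits_def split_digits_def by (auto intro!: nth_equalityI)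

lemma split_join_digits:
  assumes "(A, B) \<in> digit_box s j" "length h = s"
  shows "split_digits j (join_digits j ((A, B), (n, h))) = ((A, B), (n, h))"
  using assms unfolding digit_box_def join_digits_def split_digits_def
  by (auto intro!: nth_equalityI)

lemma join_digits_in_cube_params_iff:
  assumes "(A, B) \<in> digit_box s j" "length h = s"
  shows "join_digits j ((A, B), (n, h)) \<in> cube_params s (L + Suc j) e
    \<longleftrightarrow> (n, h) \<in> cube_params s L (carry j e A B)"
proof -
  have len: "length B = s" "length (snd (join_digits j ((A, B), (n, h)))) = s"
    using assms unfolding digit_box_def join_digits_def by auto
  have "(2::int) ^ (L + Suc j) = 2 ^ Suc j * 2 ^ L"
    by (simp add: power_add)
  then have "fst (join_digits j ((A, B), (n, h))) + cube_dot (snd (join_digits j ((A, B), (n, h)))) S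
      + e S \<in> {0..<2 ^ (L + Suc j)} \<longleftrightarrow> n + cube_dot h S + carry j e A B S \<in> {0..<2 ^ L}"
    if "S \<subseteq> {..<s}" for S
    unfolding join_digits_vertex[OF len(1) assms(2) that]
    by (simp only: mult_add_in_range_iff[OF low_digits_bounds])
  then show ?thesis
    unfolding mem_cube_params using len assms(2) by auto
qed

lemma prod_twisted_rs_join_digits:
  assumes "(A, B) \<in> digit_box s j" "(n, h) \<in> cube_params s L (carry j e A B)"
  shows "(\<Prod>S\<in>Pow {..<s}. twisted_rs c S (fst (join_digits j ((A, B), (n, h)))
      + cube_dot (snd (join_digits j ((A, B), (n, h)))) S + e S))
    = box_weight s j c e A B *
      (\<Prod>S\<in>Pow {..<s}. twisted_rs (top_bit j e A B) S (n + cube_dot h S + carry j e A B S))"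
  unfolding box_weight_def prod.distrib[symmetric]
proof (intro prod.cong refl)
  fix S assume S: "S \<in> Pow {..<s}"
  have len: "length B = s" "length h = s"
    using assms unfolding digit_box_def cube_params_def by auto
  have "0 \<le> n + cube_dot h S + carry j e A B S"
    using assms(2) S unfolding cube_params_def by auto
  moreover have "fst (join_digits j ((A, B), (n, h)))
      + cube_dot (snd (join_digits j ((A, B), (n, h)))) S + e S
    = 2 ^ Suc j * (n + cube_dot h S + carry j e A B S) + low_digits j e A B S"
    using join_digits_vertex[OF len] S by simp
  ultimately show "twisted_rs c S (fst (join_digits j ((A, B), (n, h)))
      + cube_dot (snd (join_digits j ((A, B), (n, h)))) S + e S)
    = twisted_rs c S (low_digits j e A B S) *
      twisted_rs (top_bit j e A B) S (n + cube_dot h S + carry j e A B S)"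
    by (simp del: power_Suc) (intro twisted_rs_concat low_digits_bounds; simp add: top_bit_def)
qed

theorem twisted_gowers_sum_split:
  assumes "bounded_offsets s e"
  shows "twisted_gowers_sum s (L + Suc j) c e = (\<Sum>(A, B)\<in>digit_box s j.
    box_weight s j c e A B * twisted_gowers_sum s L (top_bit j e A B) (carry j e A B))"
proof -
  define F where "F = (\<lambda>p::int \<times> int list.
    \<Prod>S\<in>Pow {..<s}. twisted_rs c S (fst p + cube_dot (snd p) S + e S))"
  define H where "H = (\<lambda>((A, B), (n, h)). box_weight s j c e A B *
    (\<Prod>S\<in>Pow {..<s}. twisted_rs (top_bit j e A B) S (n + cube_dot h S + carry j e A B S)))"
  define T where "T = Sigma (digit_box s j) (\<lambda>ab. cube_params s L (carry j e (fst ab) (snd ab)))"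
  have HF: "H b = F (join_digits j b)" if "b \<in> T" for b
  proof -
    obtain A B n h where b: "b = ((A, B), (n, h))"
      by (metis prod.collapse)
    with that have AB: "(A, B) \<in> digit_box s j" and nh: "(n, h) \<in> cube_params s L (carry j e A B)"
      unfolding T_def by auto
    show ?thesis
      unfolding b F_def H_def using prod_twisted_rs_join_digits[OF AB nh] by simp
  qed
  have "sum F (cube_params s (L + Suc j) e) = sum H T"
  proof (rule sum.reindex_bij_witness[where i = "join_digits j" and j = "split_digits j"])
    fix b assume "b \<in> T"
    obtain A B n h where b: "b = ((A, B), (n, h))"
      by (metis prod.collapse)
    with \<open>b \<in> T\<close> have AB: "(A, B) \<in> digit_box s j"
      and nh: "(n, h) \<in> cube_params s L (carry j e A B)"
      unfolding T_def by auto
    have len: "length h = s" using nh unfolding cube_params_def by simp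
    show "split_digits j (join_digits j b) = b"
      unfolding b using split_join_digits[OF AB len] .
    show "join_digits j b \<in> cube_params s (L + Suc j) e"
      unfolding b using join_digits_in_cube_params_iff[OF AB len] nh by simp
  next
    fix a assume a: "a \<in> cube_params s (L + Suc j) e"
    then obtain n h where a_eq: "a = (n, h)" and len: "length h = s"
      unfolding cube_params_def by auto
    obtain A B n' h' where split: "split_digits j a = ((A, B), (n', h'))"
      by (metis prod.collapse)
    have AB: "(A, B) \<in> digit_box s j" and len': "length h' = s"
      using split len unfolding a_eq split_digits_def digit_box_def by auto
    show join: "join_digits j (split_digits j a) = a"
      unfolding a_eq using join_split_digits[OF len] .
    then have "(n', h') \<in> cube_params s L (carry j e A B)"
      using a join_digits_in_cube_params_iff[OF AB len', of n' L e] unfolding split by simp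
    then show T: "split_digits j a \<in> T"
      using AB unfolding split T_def by simp
    with join show "H (split_digits j a) = F a"
      using HF[OF T] by simp
  qed
  also have "sum H T
      = (\<Sum>ab\<in>digit_box s j. \<Sum>p\<in>cube_params s L (carry j e (fst ab) (snd ab)). H (ab, p))"
    unfolding T_def
    using finite_digit_box finite_cube_params bounded_offsets_carry[OF assms]
    by (subst sum.Sigma) auto
  finally show ?thesis
    unfolding twisted_gowers_sum_def F_def H_def
    by (simp add: sum_distrib_left case_prod_beta)
qed

section \<open>A cancelling pair of digit boxes\<close>

text \<open>Two boxes of low digits whose contributions cancel. Both have \<open>A = 0\<close> and all
  \<open>B\<^sub>i = b\<close> for \<open>i \<ge> 1\<close>; they differ in \<open>B\<^sub>0\<close> by \<open>2p\<close>, \<open>p = 2^(2s\<^sup>2)\<close>. The step \<open>b\<close> is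
  chosen so that a low sum reaches \<open>p\<close> only when \<open>S \<supseteq> {1..<s}\<close>, so adding \<open>2p\<close> (a single bit)
  changes the Rudin-Shapiro sign exactly at the vertex \<open>S = {..<s}\<close>, while all low sums stay
  below \<open>4p = 2^j\<close> and hence produce no carry and no top bit.\<close>
definition cancel_exp :: "nat \<Rightarrow> nat" where
  "cancel_exp s = 2 * s * s + 2"

definition cancel_pivot :: "nat \<Rightarrow> int" where
  "cancel_pivot s = 2 ^ (2 * s * s)"

definition cancel_step :: "nat \<Rightarrow> int" where
  "cancel_step s = cancel_pivot s div (int s - 1) + 1"

definition cancel_digits1 :: "nat \<Rightarrow> int list" where
  "cancel_digits1 s = 0 # replicate (s - 1) (cancel_step s)"

definition cancel_digits2 :: "nat \<Rightarrow> int list" where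
  "cancel_digits2 s = 2 * cancel_pivot s # replicate (s - 1) (cancel_step s)"

lemma quotient_step_bounds:
  fixes p k :: int
  assumes "2 \<le> k" "2 * k\<^sup>2 \<le> p"
  shows "p < (k - 1) * (p div (k - 1) + 1)" "(k - 1) * (p div (k - 1) + 1) + k < 2 * p"
    "(k - 2) * (p div (k - 1) + 1) + k < p" "0 < p div (k - 1) + 1"
proof -
  define d r where "d = p div (k - 1)" and "r = p mod (k - 1)"
  have p: "p = (k - 1) * d + r" and r: "0 \<le> r" "r < k - 1"
    using assms(1) unfolding d_def r_def by simp_all
  have "(k - 1) * (2 * k - 1) < (k - 1) * d"
    using assms p r by (simp add: power2_eq_square algebra_simps)
  then have d: "2 * k - 1 < d"
    using assms(1) by (simp add: mult_less_cancel_left_pos)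
  have d_le: "1 * d \<le> (k - 1) * d"
    using assms(1) d by (intro mult_right_mono) auto
  have expand: "(k - 1) * (d + 1) = (k - 1) * d + k - 1" "(k - 2) * (d + 1) = (k - 1) * d - d + k - 2"
    by (simp_all add: algebra_simps)
  show "p < (k - 1) * (d + 1)" "(k - 1) * (d + 1) + k < 2 * p"
    "(k - 2) * (d + 1) + k < p" "0 < d + 1"
    using assms(1) p r d d_le unfolding expand by linarith+
qed

lemma cancel_step_bounds:
  assumes "2 \<le> s"
  shows "cancel_pivot s < (int s - 1) * cancel_step s"
    "(int s - 1) * cancel_step s + int s < 2 * cancel_pivot s"
    "(int s - 2) * cancel_step s + int s < cancel_pivot s" "0 < cancel_step s"
proof -
  have "int (2 * s * s) < int ((2::nat) ^ (2 * s * s))"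
    using less_exp[of "2 * s * s"] by linarith
  then have "2 * (int s)\<^sup>2 \<le> cancel_pivot s"
    unfolding cancel_pivot_def power2_eq_square by simp
  then show "cancel_pivot s < (int s - 1) * cancel_step s"
    "(int s - 1) * cancel_step s + int s < 2 * cancel_pivot s"
    "(int s - 2) * cancel_step s + int s < cancel_pivot s" "0 < cancel_step s"
    using quotient_step_bounds[of "int s" "cancel_pivot s"] assms
    unfolding cancel_step_def by simp_all
qed

lemma cancel_pivot_pos: "0 < cancel_pivot s"
  unfolding cancel_pivot_def by simp

lemma two_power_cancel_exp:
  "(2::int) ^ Suc (cancel_exp s) = 8 * cancel_pivot s" "(2::int) ^ cancel_exp s = 4 * cancel_pivot s"
  "(2::int) ^ Suc (2 * s * s) = 2 * cancel_pivot s"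
  unfolding cancel_exp_def cancel_pivot_def by (simp_all add: power_add)

lemma length_cancel_digits:
  "2 \<le> s \<Longrightarrow> length (cancel_digits1 s) = s" "2 \<le> s \<Longrightarrow> length (cancel_digits2 s) = s"
  unfolding cancel_digits1_def cancel_digits2_def by auto

lemma nth_cancel_digits:
  "i < s \<Longrightarrow> cancel_digits1 s ! i = (if i = 0 then 0 else cancel_step s)"
  "i < s \<Longrightarrow> cancel_digits2 s ! i = cancel_digits1 s ! i + (if i = 0 then 2 * cancel_pivot s else 0)"
  unfolding cancel_digits1_def cancel_digits2_def by (cases i; simp)+

lemma cancel_digits_in_digit_box:
  assumes "2 \<le> s"
  shows "(0, cancel_digits1 s) \<in> digit_box s (cancel_exp s)"
    "(0, cancel_digits2 s) \<in> digit_box s (cancel_exp s)"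
proof -
  have "1 * cancel_step s \<le> (int s - 1) * cancel_step s"
    using assms cancel_step_bounds(4)[OF assms] by (intro mult_right_mono) auto
  then have "0 < cancel_step s" "cancel_step s < 6 * cancel_pivot s"
    using cancel_step_bounds[OF assms] cancel_pivot_pos[of s] by linarith+
  then show "(0, cancel_digits1 s) \<in> digit_box s (cancel_exp s)"
    "(0, cancel_digits2 s) \<in> digit_box s (cancel_exp s)"
    unfolding digit_box_def two_power_cancel_exp
    using length_cancel_digits[OF assms] nth_cancel_digits cancel_pivot_pos[of s] by auto
qed

lemma card_Diff_zero_eq_iff:
  assumes "S \<subseteq> {..<s}"
  shows "card (S - {0}) = s - 1 \<longleftrightarrow> {1..<s} \<subseteq> S"
proof
  have sub: "S - {0} \<subseteq> {1..<s}" using assms by auto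
  show "{1..<s} \<subseteq> S" if "card (S - {0}) = s - 1"
    using card_subset_eq[OF finite_atLeastLessThan sub] that by auto
  show "card (S - {0}) = s - 1" if "{1..<s} \<subseteq> S"
  proof -
    have "S - {0} = {1..<s}" using sub that by auto
    then show ?thesis by simp
  qed
qed

lemma low_sum_cancel_digits1:
  assumes "2 \<le> s" "bounded_offsets s e" "S \<subseteq> {..<s}"
  shows "0 \<le> low_sum e 0 (cancel_digits1 s) S" "low_sum e 0 (cancel_digits1 s) S < 2 * cancel_pivot s"
    "cancel_pivot s \<le> low_sum e 0 (cancel_digits1 s) S \<longleftrightarrow> {1..<s} \<subseteq> S"
proof -
  define k where "k = card (S - {0})"
  have "cube_dot (cancel_digits1 s) S = (\<Sum>i\<in>S - {0}. cancel_step s)"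
    unfolding cube_dot_def using assms(3) nth_cancel_digits(1)
    by (intro sum.mono_neutral_cong_right) (auto intro: finite_subset)
  then have T: "low_sum e 0 (cancel_digits1 s) S = cancel_step s * int k + e S"
    unfolding low_sum_def k_def by simp
  have e: "0 \<le> e S" "e S \<le> int s"
    using assms(2,3) unfolding bounded_offsets_def by auto
  have "S - {0} \<subseteq> {1..<s}" using assms(3) by auto
  then have k: "k \<le> s - 1"
    using card_mono[of "{1..<s}" "S - {0}"] unfolding k_def by simp
  have b: "0 < cancel_step s" by (rule cancel_step_bounds(4)[OF assms(1)])
  have "cancel_step s * int k + e S < 2 * cancel_pivot s \<and>
      (cancel_pivot s \<le> cancel_step s * int k + e S \<longleftrightarrow> k = s - 1)"
  proof (cases "k = s - 1")
    case True
    then have "cancel_step s * int k = (int s - 1) * cancel_step s"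
      using assms(1) by (simp add: of_nat_diff)
    then show ?thesis using cancel_step_bounds[OF assms(1)] e True by linarith
  next
    case False
    then have "cancel_step s * int k \<le> cancel_step s * (int s - 2)"
      using k assms(1) b by (intro mult_left_mono) auto
    also have "\<dots> = (int s - 2) * cancel_step s" by (rule mult.commute)
    finally show ?thesis using cancel_step_bounds[OF assms(1)] e False by linarith
  qed
  moreover have "0 \<le> cancel_step s * int k" using b by simp
  ultimately show "0 \<le> low_sum e 0 (cancel_digits1 s) S"
    "low_sum e 0 (cancel_digits1 s) S < 2 * cancel_pivot s"
    "cancel_pivot s \<le> low_sum e 0 (cancel_digits1 s) S \<longleftrightarrow> {1..<s} \<subseteq> S"
    unfolding T k_def card_Diff_zero_eq_iff[OF assms(3), symmetric] using e by linarith+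
qed

lemma low_sum_cancel_digits2:
  assumes "S \<subseteq> {..<s}"
  shows "low_sum e 0 (cancel_digits2 s) S
    = low_sum e 0 (cancel_digits1 s) S + (if 0 \<in> S then 2 * cancel_pivot s else 0)"
proof -
  have "finite S" using assms by (rule finite_subset) simp
  then have "cube_dot (cancel_digits2 s) S
      = cube_dot (cancel_digits1 s) S + (if 0 \<in> S then 2 * cancel_pivot s else 0)"
    unfolding cube_dot_def using assms nth_cancel_digits(2)
    by (simp add: sum.distrib subset_iff sum.delta cong: sum.cong)
  then show ?thesis
    unfolding low_sum_def by simp
qed

lemma cancel_digits_no_carry:
  assumes "2 \<le> s" "bounded_offsets s e" "S \<subseteq> {..<s}"
    and "d \<in> {cancel_digits1 s, cancel_digits2 s}"
  shows "low_digits (cancel_exp s) e 0 d S = low_sum e 0 d S"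
    "carry (cancel_exp s) e 0 d S = 0" "\<not> top_bit (cancel_exp s) e 0 d S"
proof -
  have "low_sum e 0 (cancel_digits1 s) S \<le> low_sum e 0 (cancel_digits2 s) S"
    "low_sum e 0 (cancel_digits2 s) S \<le> low_sum e 0 (cancel_digits1 s) S + 2 * cancel_pivot s"
    using low_sum_cancel_digits2[OF assms(3)] cancel_pivot_pos[of s] by auto
  then have "0 \<le> low_sum e 0 d S" "low_sum e 0 d S < 4 * cancel_pivot s"
    using assms(4) low_sum_cancel_digits1(1,2)[OF assms(1-3)] by auto
  then show "low_digits (cancel_exp s) e 0 d S = low_sum e 0 d S"
    "carry (cancel_exp s) e 0 d S = 0" "\<not> top_bit (cancel_exp s) e 0 d S"
    unfolding low_digits_def carry_def top_bit_def two_power_cancel_exp by simp_all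
qed

lemma twisted_rs_cancel_digits2:
  assumes "2 \<le> s" "bounded_offsets s e" "S \<subseteq> {..<s}"
  shows "twisted_rs c S (low_sum e 0 (cancel_digits2 s) S)
    = (if S = {..<s} then -1 else 1) * twisted_rs c S (low_sum e 0 (cancel_digits1 s) S)"
proof (cases "0 \<in> S")
  case False
  then show ?thesis using low_sum_cancel_digits2[OF assms(3)] assms(1) by auto
next
  case True
  define T where "T = low_sum e 0 (cancel_digits1 s) S"
  have T: "0 \<le> T" "T < 2 ^ Suc (2 * s * s)"
    using low_sum_cancel_digits1[OF assms] unfolding T_def two_power_cancel_exp by auto
  have "{1..<s} \<subseteq> S \<longleftrightarrow> S = {..<s}"
    using True assms(3) by (auto simp: subset_iff) (metis Suc_leI neq0_conv)
  then have "2 ^ (2 * s * s) \<le> T \<longleftrightarrow> S = {..<s}"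
    using low_sum_cancel_digits1(3)[OF assms] unfolding T_def cancel_pivot_def by simp
  then have "twisted_rs c S (2 ^ Suc (2 * s * s) * 1 + T)
      = twisted_rs c S T * (if S = {..<s} then -1 else 1)"
    using twisted_rs_concat[OF _ T, of 1 "\<lambda>_. S = {..<s}"]
    by (simp add: twisted_rs_def rudin_shapiro_1)
  moreover have "low_sum e 0 (cancel_digits2 s) S = 2 ^ Suc (2 * s * s) * 1 + T"
    using low_sum_cancel_digits2[OF assms(3)] True unfolding T_def two_power_cancel_exp by simp
  ultimately show ?thesis
    unfolding T_def by simp
qed

lemma box_weight_cancel_digits:
  assumes "2 \<le> s" "bounded_offsets s e"
  shows "box_weight s (cancel_exp s) c e 0 (cancel_digits2 s)
    = - box_weight s (cancel_exp s) c e 0 (cancel_digits1 s)"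
proof -
  have "box_weight s (cancel_exp s) c e 0 (cancel_digits2 s)
      = (\<Prod>S\<in>Pow {..<s}. (if S = {..<s} then -1 else 1)
          * twisted_rs c S (low_digits (cancel_exp s) e 0 (cancel_digits1 s) S))"
    unfolding box_weight_def
    using cancel_digits_no_carry(1)[OF assms] twisted_rs_cancel_digits2[OF assms]
    by (intro prod.cong) auto
  also have "\<dots> = (\<Prod>S\<in>Pow {..<s}. if S = {..<s} then -1 else (1::real))
      * box_weight s (cancel_exp s) c e 0 (cancel_digits1 s)"
    unfolding box_weight_def by (simp add: prod.distrib)
  also have "(\<Prod>S\<in>Pow {..<s}. if S = {..<s} then -1 else (1::real)) = -1"
    by (subst prod.delta) auto
  finally show ?thesis by simp
qed

section \<open>Exponential decay\<close>

lemma abs_sum_le_cancelling_pair: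
  fixes f :: "'a \<Rightarrow> real"
  assumes "finite X" "a \<in> X" "b \<in> X" "a \<noteq> b" "f a + f b = 0"
    and "\<And>x. x \<in> X \<Longrightarrow> \<bar>f x\<bar> \<le> M"
  shows "\<bar>sum f X\<bar> \<le> (real (card X) - 2) * M"
proof -
  have "sum f X = f a + f b + sum f (X - {a} - {b})"
    using assms(1-4) by (simp add: sum.remove[of X a] sum.remove[of "X - {a}" b])
  then have "\<bar>sum f X\<bar> \<le> (\<Sum>x\<in>X - {a} - {b}. \<bar>f x\<bar>)"
    using assms(5) by (simp add: sum_abs)
  also have "\<dots> \<le> real (card (X - {a} - {b})) * M"
    using assms(6) by (intro sum_bounded_above) auto
  also have "real (card (X - {a} - {b})) = real (card X) - 2"
  proof -
    have "card {a, b} \<le> card X"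
      using assms(1-3) by (intro card_mono) auto
    then show ?thesis
      using assms(1-4) by (simp add: card_Diff_singleton of_nat_diff)
  qed
  finally show ?thesis .
qed

theorem twisted_gowers_sum_decay:
  assumes "2 \<le> s" "bounded_offsets s e"
  shows "\<bar>twisted_gowers_sum s (L + Suc (cancel_exp s) * k) c e\<bar>
    \<le> (2 * real s + 2) ^ (s + 1) * 2 ^ ((L + Suc (cancel_exp s) * k) * (s + 1))
      * (1 - 2 / 2 ^ (Suc (cancel_exp s) * (s + 1))) ^ k"
  using assms(2)
proof (induction k arbitrary: c e)
  case 0
  then show ?case
    using abs_twisted_gowers_sum_le[of s L c e] card_cube_params_le[of s e L] by simp
next
  case (Suc k)
  define J where "J = cancel_exp s"
  define N :: real where "N = 2 ^ (Suc J * (s + 1))"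
  define M where "M = (2 * real s + 2) ^ (s + 1) * 2 ^ ((L + Suc J * k) * (s + 1)) * (1 - 2 / N) ^ k"
  define f where "f = (\<lambda>(A, B). box_weight s J c e A B *
    twisted_gowers_sum s (L + Suc J * k) (top_bit J e A B) (carry J e A B))"
  have split: "twisted_gowers_sum s (L + Suc J * Suc k) c e = sum f (digit_box s J)"
    using twisted_gowers_sum_split[OF Suc.prems, of "L + Suc J * k" J c]
    unfolding f_def by (simp add: algebra_simps)
  have bound: "\<bar>f AB\<bar> \<le> M" if "AB \<in> digit_box s J" for AB
  proof -
    obtain A B where AB: "AB = (A, B)" by (cases AB)
    have "bounded_offsets s (carry J e A B)"
      using bounded_offsets_carry[OF Suc.prems] that unfolding AB .
    then have "\<bar>twisted_gowers_sum s (L + Suc J * k) (top_bit J e A B) (carry J e A B)\<bar> \<le> M"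
      unfolding M_def N_def J_def by (rule Suc.IH)
    then show ?thesis
      unfolding f_def AB box_weight_def by (simp add: abs_mult abs_prod_twisted_rs)
  qed
  have no_carry: "twisted_gowers_sum s (L + Suc J * k) (top_bit J e 0 d) (carry J e 0 d)
      = twisted_gowers_sum s (L + Suc J * k) (\<lambda>_. False) (\<lambda>_. 0)"
    if "d \<in> {cancel_digits1 s, cancel_digits2 s}" for d
    using cancel_digits_no_carry(2,3)[OF assms(1) Suc.prems _ that] unfolding J_def
    by (intro twisted_gowers_sum_cong) auto
  have "f (0, cancel_digits1 s) + f (0, cancel_digits2 s) = 0"
    unfolding f_def using no_carry box_weight_cancel_digits[OF assms(1) Suc.prems]
    unfolding J_def by simp
  moreover have "(0, cancel_digits1 s) \<noteq> (0, cancel_digits2 s)"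
    using cancel_pivot_pos[of s] unfolding cancel_digits1_def cancel_digits2_def by simp
  ultimately have "\<bar>sum f (digit_box s J)\<bar> \<le> (real (card (digit_box s J)) - 2) * M"
    using cancel_digits_in_digit_box[OF assms(1)] finite_digit_box bound unfolding J_def
    by (intro abs_sum_le_cancelling_pair) auto
  also have "(real (card (digit_box s J)) - 2) * M
      = (2 * real s + 2) ^ (s + 1) * (2 ^ ((L + Suc J * k) * (s + 1)) * N) * (1 - 2 / N) ^ Suc k"
  proof -
    have "real (card (digit_box s J)) - 2 = N * (1 - 2 / N)"
      unfolding card_digit_box N_def by (simp add: right_diff_distrib)
    then show ?thesis
      unfolding M_def by (simp only: power_Suc mult_ac)
  qed
  also have "(2::real) ^ ((L + Suc J * k) * (s + 1)) * N = 2 ^ ((L + Suc J * Suc k) * (s + 1))"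
    unfolding N_def power_add[symmetric] by (simp add: algebra_simps)
  finally show ?case
    using split unfolding J_def N_def by simp
qed

lemma card_gowers_params_ge:
  assumes "(s + 1) * m \<le> 2 ^ L"
  shows "m ^ (s + 1) \<le> card (gowers_params s (2 ^ L))"
proof -
  define G where "G = {0..<int m} \<times> {xs. set xs \<subseteq> {0..<int m} \<and> length xs = s}"
  have "G \<subseteq> gowers_params s (2 ^ L)"
  proof
    fix p assume "p \<in> G"
    then obtain n h where p: "p = (n, h)" and n: "0 \<le> n" "n \<le> int m - 1"
      and len: "length h = s" and h_set: "set h \<subseteq> {0..<int m}"
      unfolding G_def by auto
    have h: "0 \<le> h ! i \<and> h ! i \<le> int m - 1" if "i < s" for i
    proof -
      have "h ! i \<in> set h" using that len by simp
      with h_set show ?thesis by auto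
    qed
    have "n + (\<Sum>i\<in>S. h ! i) \<in> {0..<int (2 ^ L)}" if "S \<subseteq> {..<s}" for S
    proof -
      have "0 \<le> (\<Sum>i\<in>S. h ! i)"
        using h that by (intro sum_nonneg) auto
      moreover have "(\<Sum>i\<in>S. h ! i) \<le> int (card S) * (int m - 1)"
        using h that by (intro sum_bounded_above) auto
      moreover have "int (card S) * (int m - 1) \<le> int s * (int m - 1)"
        using card_mono[OF _ that] n by (intro mult_right_mono) auto
      moreover have "int s * (int m - 1) + (int m - 1) = int ((s + 1) * m) - int s - 1"
        by (simp add: algebra_simps)
      moreover have "int ((s + 1) * m) \<le> int (2 ^ L)"
        using assms by (simp only: of_nat_le_iff)
      ultimately show ?thesis
        using n by simp
    qed
    then show "p \<in> gowers_params s (2 ^ L)"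
      unfolding gowers_params_def p using len by auto
  qed
  then have "card G \<le> card (gowers_params s (2 ^ L))"
    using finite_cube_params[of s "\<lambda>_. 0" L]
    by (intro card_mono) (auto simp: bounded_offsets_def cube_params_zero)
  moreover have "card G = m ^ (s + 1)"
    unfolding G_def by (simp add: card_cartesian_product card_lists_length_eq)
  ultimately show ?thesis by simp
qed

lemma abs_gowers_pow_rudin_shapiro_le:
  assumes "2 \<le> s" "s + 1 \<le> L"
  shows "\<bar>gowers_pow rudin_shapiro s (2 ^ L)\<bar> \<le> (2 * real s + 2) ^ (s + 1) * 2 ^ ((s + 1) * (s + 1))
    * (1 - 2 / 2 ^ (Suc (cancel_exp s) * (s + 1))) ^ (L div Suc (cancel_exp s))"
proof -
  define J where "J = Suc (cancel_exp s)"
  define E where "E = (2 * real s + 2) ^ (s + 1)"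
  define \<theta> :: real where "\<theta> = 1 - 2 / 2 ^ (J * (s + 1))"
  have "\<bar>twisted_gowers_sum s (L mod J + J * (L div J)) (\<lambda>_. False) (\<lambda>_. 0)\<bar>
      \<le> E * 2 ^ ((L mod J + J * (L div J)) * (s + 1)) * \<theta> ^ (L div J)"
    unfolding E_def \<theta>_def J_def
    by (rule twisted_gowers_sum_decay[OF assms(1)]) (simp add: bounded_offsets_def)
  then have GG: "\<bar>twisted_gowers_sum s L (\<lambda>_. False) (\<lambda>_. 0)\<bar> \<le> E * 2 ^ (L * (s + 1)) * \<theta> ^ (L div J)"
    by (simp only: mod_mult_div_eq)
  have card: "(2::real) ^ ((L - (s + 1)) * (s + 1)) \<le> card (gowers_params s (2 ^ L))"
  proof -
    have "(s + 1) * 2 ^ (L - (s + 1)) \<le> 2 ^ (s + 1) * (2::nat) ^ (L - (s + 1))"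
      using less_exp[of "s + 1"] by (intro mult_right_mono) auto
    also have "\<dots> = 2 ^ L"
      using assms(2) by (metis le_add_diff_inverse power_add)
    finally have "(2 ^ (L - (s + 1))) ^ (s + 1) \<le> card (gowers_params s (2 ^ L))"
      by (rule card_gowers_params_ge)
    then have "real ((2 ^ (L - (s + 1))) ^ (s + 1)) \<le> real (card (gowers_params s (2 ^ L)))"
      by (simp only: of_nat_le_iff)
    then show ?thesis
      by (simp only: power_mult of_nat_power of_nat_numeral)
  qed
  have "(2::real) ^ 1 \<le> 2 ^ (J * (s + 1))"
    unfolding J_def by (intro power_increasing) auto
  then have "0 \<le> \<theta>"
    unfolding \<theta>_def by simp
  have "\<bar>gowers_pow rudin_shapiro s (2 ^ L)\<bar>
      = \<bar>twisted_gowers_sum s L (\<lambda>_. False) (\<lambda>_. 0)\<bar> / card (gowers_params s (2 ^ L))"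
    by (simp add: gowers_pow_rudin_shapiro_eq)
  also have "\<dots> \<le> E * 2 ^ (L * (s + 1)) * \<theta> ^ (L div J) / 2 ^ ((L - (s + 1)) * (s + 1))"
    using GG card \<open>0 \<le> \<theta>\<close> unfolding E_def by (intro frac_le) auto
  also have "L * (s + 1) = (L - (s + 1)) * (s + 1) + (s + 1) * (s + 1)"
    using assms(2) by (metis add_mult_distrib le_add_diff_inverse2)
  finally show ?thesis
    unfolding E_def \<theta>_def J_def power_add by simp
qed

lemma power_div_le_powr:
  fixes \<theta> :: real
  assumes "0 < \<theta>" "\<theta> \<le> 1" "0 < J"
  shows "\<theta> ^ (L div J) \<le> \<theta> powr (real L / real J) / \<theta>"
proof -
  have "real L < real J * (real (L div J) + 1)"
  proof -
    have "L < J * (L div J) + J"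
      using mod_mult_div_eq[of L J] mod_less_divisor[OF assms(3), of L] by linarith
    then have "L < J * (L div J + 1)"
      by (simp add: algebra_simps)
    then have "real L < real (J * (L div J + 1))"
      by (simp only: of_nat_less_iff)
    then show ?thesis
      by (simp add: algebra_simps)
  qed
  then have "real L / real J - 1 \<le> real (L div J)"
    using assms(3) by (simp add: field_simps)
  then have "\<theta> powr real (L div J) \<le> \<theta> powr (real L / real J - 1)"
    using assms(1,2) by (intro powr_mono') auto
  then show ?thesis
    using assms(1) by (simp add: powr_realpow powr_diff)
qed

lemma root_bigo_of_block_decay:
  fixes g :: "nat \<Rightarrow> real" and \<theta> :: real
  assumes "0 < \<theta>" "\<theta> < 1" "0 < J" "0 < n"
    and bound: "\<And>L. L\<^sub>0 \<le> L \<Longrightarrow> \<bar>g L\<bar> \<le> K * \<theta> ^ (L div J)"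
  shows "\<exists>c>0. (\<lambda>L. root n (g L)) \<in> O(\<lambda>L. 2 powr (- c * real L))"
proof -
  define \<gamma> where "\<gamma> = - log 2 \<theta> / real J"
  have "0 < \<gamma>"
    unfolding \<gamma>_def using assms(1-3) by (simp add: divide_neg_pos)
  have "0 \<le> K * \<theta> ^ (L\<^sub>0 div J)"
    using bound[of L\<^sub>0] by linarith
  moreover have "0 < \<theta> ^ (L\<^sub>0 div J)"
    using assms(1) by simp
  ultimately have "0 \<le> K"
    using zero_le_mult_iff[of K "\<theta> ^ (L\<^sub>0 div J)"] by auto
  have "\<bar>root n (g L)\<bar> \<le> root n (K / \<theta>) * 2 powr (- (\<gamma> / real n) * real L)" if "L\<^sub>0 \<le> L" for L
  proof -
    have powr_eq: "\<theta> powr (real L / real J) = 2 powr (- \<gamma> * real L)"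
      unfolding \<gamma>_def using assms(1) by (simp add: powr_def log_def)
    have "\<bar>g L\<bar> \<le> K * \<theta> ^ (L div J)"
      by (rule bound[OF that])
    also have "\<dots> \<le> K * (\<theta> powr (real L / real J) / \<theta>)"
      using power_div_le_powr[of \<theta> J L] assms(1-3) \<open>0 \<le> K\<close> by (intro mult_left_mono) auto
    also have "\<dots> = K / \<theta> * 2 powr (- \<gamma> * real L)"
      using powr_eq by simp
    finally have "\<bar>g L\<bar> \<le> K / \<theta> * 2 powr (- \<gamma> * real L)" .
    then have "root n \<bar>g L\<bar> \<le> root n (K / \<theta> * 2 powr (- \<gamma> * real L))"
      using assms(4) by simp
    also have "\<dots> = root n (K / \<theta>) * root n (2 powr (- \<gamma> * real L))"
      by (rule real_root_mult)
    also have "root n (2 powr (- \<gamma> * real L)) = 2 powr (- (\<gamma> / real n) * real L)"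
      using assms(4) by (simp add: root_powr_inverse powr_powr)
    finally show ?thesis
      using assms(4) by (simp add: real_root_abs)
  qed
  then have "(\<lambda>L. root n (g L)) \<in> O(\<lambda>L. 2 powr (- (\<gamma> / real n) * real L))"
    by (intro bigoI[where c = "root n (K / \<theta>)"] eventually_mono[OF eventually_ge_at_top[of L\<^sub>0]])
      simp
  then show ?thesis
    using \<open>0 < \<gamma>\<close> assms(4) by (intro exI[of _ "\<gamma> / real n"]) simp
qed

theorem corollary3p3:
  fixes s :: nat
  assumes "s \<ge> 2"
  shows "\<exists>c::real > 0. (\<lambda>L::nat. gowers_norm rudin_shapiro s (2 ^ L))
           \<in> O(\<lambda>L. 2 powr (- c * real L))"
proof -
  define J where "J = Suc (cancel_exp s)"
  define \<theta> :: real where "\<theta> = 1 - 2 / 2 ^ (J * (s + 1))"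
  have "(2::real) ^ 2 \<le> 2 ^ (J * (s + 1))"
    using assms unfolding J_def by (intro power_increasing) auto
  then have \<theta>: "0 < \<theta>" "\<theta> < 1"
    unfolding \<theta>_def by simp_all
  have bound: "\<bar>gowers_pow rudin_shapiro s (2 ^ L)\<bar>
      \<le> (2 * real s + 2) ^ (s + 1) * 2 ^ ((s + 1) * (s + 1)) * \<theta> ^ (L div J)"
    if "s + 1 \<le> L" for L
    using abs_gowers_pow_rudin_shapiro_le[OF assms that] unfolding J_def \<theta>_def .
  have "0 < J" "0 < (2::nat) ^ s"
    unfolding J_def by simp_all
  then show ?thesis
    unfolding gowers_norm_def by (rule root_bigo_of_block_decay[OF \<theta> _ _ bound])
qed

end
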